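(* Let $W=W(v_0;v_1,\dots,v_k)$ be a $k$-wheel and let $d:[1,k]\to\{1,2\}$ be a nonconstant function. Then there are exactly two coupled trees $T$ of $W$ such that $\operatorname{val}_T(v_i)=d(i)$ for all $i\in[1,k]$. (Consequently $W$ has exactly $2^{k+1}-4$ coupled trees.)
   Context: For $k\ge 3$ and distinct vertices $v_0,\dots,v_k$, the $k$-wheel $W=W(v_0;v_1,\dots,v_k)$ is the graph whose edges are the radii $v_0v_i$ ($1\le i\le k$) and the chords $v_iv_{i+1}$ ($1\le i\le k$), with $v_{k+1}=v_1$. A coupled tree of $W$ is a spanning tree $T\subseteq E(W)$ of $V(W)$ such that $E(W)\setminus T$ is also a spanning tree of $V(W)$. $\operatorname{val}_T(v)$ is the number of edges of $T$ incident to $v$. *)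

theory Defs
  imports Main
begin

text \<open>Simple undirected graphs: an edge is a two-element set of vertices.\<close>

definition wheel_vertices :: "(nat \<Rightarrow> 'a) \<Rightarrow> nat \<Rightarrow> 'a set" where
  "wheel_vertices v k = v ` {0..k}"

definition wheel_edges :: "(nat \<Rightarrow> 'a) \<Rightarrow> nat \<Rightarrow> 'a set set" where
  "wheel_edges v k =
     {{v 0, v i} | i. 1 \<le> i \<and> i \<le> k} \<union>
     {{v i, v (if i = k then 1 else i + 1)} | i. 1 \<le> i \<and> i \<le> k}"

definition adj :: "'a set set \<Rightarrow> 'a \<Rightarrow> 'a \<Rightarrow> bool" where
  "adj T x y \<longleftrightarrow> x \<noteq> y \<and> {x, y} \<in> T"

definition connected_on :: "'a set \<Rightarrow> 'a set set \<Rightarrow> bool" where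
  "connected_on V T \<longleftrightarrow> (\<forall>x\<in>V. \<forall>y\<in>V. (adj T)\<^sup>*\<^sup>* x y)"

definition has_cycle :: "'a set set \<Rightarrow> bool" where
  "has_cycle T \<longleftrightarrow> (\<exists>xs. length xs \<ge> 3 \<and> distinct xs \<and>
      (\<forall>i < length xs. {xs ! i, xs ! ((i + 1) mod length xs)} \<in> T))"

definition spanning_tree :: "'a set \<Rightarrow> 'a set set \<Rightarrow> bool" where
  "spanning_tree V T \<longleftrightarrow>
     T \<subseteq> {{x, y} | x y. x \<in> V \<and> y \<in> V \<and> x \<noteq> y} \<and>
     connected_on V T \<and> \<not> has_cycle T"

definition coupled_tree :: "'a set \<Rightarrow> 'a set set \<Rightarrow> 'a set set \<Rightarrow> bool" where
  "coupled_tree V E T \<longleftrightarrow> T \<subseteq> E \<and> spanning_tree V T \<and> spanning_tree V (E - T)"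

definition val :: "'a set set \<Rightarrow> 'a \<Rightarrow> nat" where
  "val T x = card {e \<in> T. x \<in> e}"

end

theory Submission
  imports Defs
begin

(* Every rim vertex v_i meets both T and
   its complement, so the radius at v_i lies on the other side of T than the chord entering v_i
   (the first rule) or than the chord leaving v_i (the last rule). If both rules failed somewhere,
   a shortest arc from a failure of the last rule to a failure of the first one would have its
   chords and its two end radii on the same side, closing a cycle through the hub. Hence one rule
   holds everywhere, and T is determined by that rule and its set C of chords, which must be a
   proper nonempty subset of the rim. Conversely both rules produce coupled trees: every maximal
   run of chords is attached to the hub at one end, and complementing C gives the complementary
   tree. The valence of v_i is 2 exactly when the chord leaving (resp. entering) v_i is in C, so a
   nonconstant valence function d determines C under each rule, and there are 2 (2^k - 2) coupled
   trees in all. *)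

section \<open>Cycles and spanning trees\<close>

lemma has_cycleI:
  assumes "3 \<le> length xs" and "distinct xs"
    and path: "\<And>i. Suc i < length xs \<Longrightarrow> {xs ! i, xs ! Suc i} \<in> T"
    and closing: "{last xs, hd xs} \<in> T"
  shows "has_cycle T"
  unfolding has_cycle_def
proof (intro exI conjI allI impI)
  fix i assume i: "i < length xs"
  show "{xs ! i, xs ! ((i + 1) mod length xs)} \<in> T"
  proof (cases "Suc i < length xs")
    case True
    then show ?thesis using path by simp
  next
    case False
    then have "i = length xs - 1" and "xs \<noteq> []" using i by auto
    then show ?thesis using closing by (simp add: last_conv_nth hd_conv_nth)
  qed
qed (use assms in auto)

lemma has_cycle_obtains_peak:
  fixes f :: "'a \<Rightarrow> 'b::linorder"
  assumes "has_cycle T"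
  obtains x y z where "y \<noteq> z" "{x, y} \<in> T" "{x, z} \<in> T" "f y \<le> f x" "f z \<le> f x"
proof -
  obtain xs where len: "3 \<le> length xs" and dist: "distinct xs"
    and cyc: "\<forall>i<length xs. {xs ! i, xs ! ((i + 1) mod length xs)} \<in> T"
    using assms unfolding has_cycle_def by blast
  define n where "n = length xs"
  obtain i where i: "i < n" and peak: "\<And>j. j < n \<Longrightarrow> f (xs ! j) \<le> f (xs ! i)"
  proof -
    have "Max (f ` set xs) \<in> f ` set xs" using len by (intro Max_in) auto
    then obtain i where "i < n" "f (xs ! i) = Max (f ` set xs)"
      unfolding n_def by (auto simp: in_set_conv_nth)
    then show thesis using that by (simp add: n_def)
  qed
  define nxt where "nxt = (i + 1) mod n"
  define prv where "prv = (i + n - 1) mod n"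
  have n: "3 \<le> n" "0 < n" using len by (auto simp: n_def)
  have "(prv + 1) mod n = i"
    using i n unfolding prv_def by (simp add: mod_Suc_eq)
  then have e1: "{xs ! i, xs ! prv} \<in> T"
    using cyc n i unfolding prv_def n_def by (metis insert_commute mod_less_divisor)
  have e2: "{xs ! i, xs ! nxt} \<in> T" using cyc i unfolding nxt_def n_def by blast
  have "nxt \<noteq> prv"
    using i n unfolding nxt_def prv_def
    by (cases "i = 0"; cases "Suc i = n") (auto simp: mod_if)
  then have "xs ! prv \<noteq> xs ! nxt"
    using dist n unfolding nxt_def prv_def n_def by (simp add: nth_eq_iff_index_eq)
  then show thesis
    using that e1 e2 peak n unfolding nxt_def prv_def by simp
qed

lemma symp_adj: "symp (adj T)"
  unfolding adj_def by (rule sympI) (auto simp: insert_commute)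

lemma spanning_tree_parent_edges:
  fixes rank :: "'i \<Rightarrow> nat"
  assumes inj: "inj_on v I" and root: "r \<in> I"
    and parent: "\<And>i. i \<in> I \<Longrightarrow> i \<noteq> r \<Longrightarrow> q i \<in> I \<and> rank (q i) < rank i"
  shows "spanning_tree (v ` I) ((\<lambda>i. {v i, v (q i)}) ` (I - {r}))"
    (is "spanning_tree _ ?T")
proof -
  have ne: "v i \<noteq> v (q i)" if "i \<in> I" "i \<noteq> r" for i
    using parent[OF that] inj that by (metis inj_on_eq_iff less_irrefl)
  have reach: "(adj ?T)\<^sup>*\<^sup>* (v i) (v r)" if "i \<in> I" for i
    using that
  proof (induction "rank i" arbitrary: i rule: less_induct)
    case less
    show ?case
    proof (cases "i = r")
      case False
      then have "adj ?T (v i) (v (q i))" using less.prems ne unfolding adj_def by blast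
      moreover have "(adj ?T)\<^sup>*\<^sup>* (v (q i)) (v r)"
        using parent[OF less.prems False] less.hyps by blast
      ultimately show ?thesis by (rule converse_rtranclp_into_rtranclp)
    qed simp
  qed
  have "connected_on (v ` I) ?T"
    unfolding connected_on_def
  proof (intro ballI)
    fix x y assume "x \<in> v ` I" "y \<in> v ` I"
    then have "(adj ?T)\<^sup>*\<^sup>* x (v r)" "(adj ?T)\<^sup>*\<^sup>* y (v r)"
      using reach by blast+
    then have "(adj ?T)\<^sup>*\<^sup>* x (v r)" "(adj ?T)\<^sup>*\<^sup>* (v r) y"
      by (auto intro: sympD[OF symp_rtranclp[OF symp_adj]])
    then show "(adj ?T)\<^sup>*\<^sup>* x y" by (rule rtranclp_trans)
  qed
  moreover have "\<not> has_cycle ?T"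
  proof
    define f where "f x = rank (the_inv_into I v x)" for x
    have f: "f (v i) = rank i" if "i \<in> I" for i
      using that inj unfolding f_def by (simp add: the_inv_into_f_f)
    have downhill: "\<exists>i\<in>I - {r}. x = v i \<and> y = v (q i)" if edge: "{x, y} \<in> ?T" and le: "f y \<le> f x" for x y
    proof -
      obtain i where i: "i \<in> I - {r}" "{x, y} = {v i, v (q i)}" using edge by blast
      have "f (v (q i)) < f (v i)" using parent i f by simp
      moreover have "x = v i \<and> y = v (q i) \<or> x = v (q i) \<and> y = v i"
        using i(2) by (simp add: doubleton_eq_iff)
      ultimately show ?thesis using i(1) le by auto
    qed
    assume "has_cycle ?T"
    then obtain x y z where "y \<noteq> z" "{x, y} \<in> ?T" "{x, z} \<in> ?T" "f y \<le> f x" "f z \<le> f x"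
      by (rule has_cycle_obtains_peak)
    then obtain i j where "i \<in> I" "j \<in> I" "x = v i" "y = v (q i)" "x = v j" "z = v (q j)"
      using downhill by (metis DiffD1)
    with \<open>y \<noteq> z\<close> show False using inj by (auto dest: inj_onD)
  qed
  moreover have "?T \<subseteq> {{x, y} | x y. x \<in> v ` I \<and> y \<in> v ` I \<and> x \<noteq> y}"
    using parent ne by blast
  ultimately show ?thesis unfolding spanning_tree_def by blast
qed

section \<open>Edge sets of the wheel\<close>

locale wheel =
  fixes v :: "nat \<Rightarrow> 'a" and k :: nat
  assumes three_le_k: "3 \<le> k" and inj_v: "inj_on v {0..k}"
begin

abbreviation V where "V \<equiv> wheel_vertices v k"
abbreviation E where "E \<equiv> wheel_edges v k"

definition rim_succ :: "nat \<Rightarrow> nat" where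
  "rim_succ i = (if i = k then 1 else i + 1)"

definition rim_pred :: "nat \<Rightarrow> nat" where
  "rim_pred i = (if i = 1 then k else i - 1)"

definition radius :: "nat \<Rightarrow> 'a set" where
  "radius i = {v 0, v i}"

definition chord :: "nat \<Rightarrow> 'a set" where
  "chord i = {v i, v (rim_succ i)}"

definition subwheel :: "nat set \<Rightarrow> nat set \<Rightarrow> 'a set set" where
  "subwheel X C = radius ` X \<union> chord ` C"

lemma rim_succ_in_rim: "i \<in> {1..k} \<Longrightarrow> rim_succ i \<in> {1..k}"
  and rim_pred_in_rim: "i \<in> {1..k} \<Longrightarrow> rim_pred i \<in> {1..k}"
  and rim_pred_succ: "i \<in> {1..k} \<Longrightarrow> rim_pred (rim_succ i) = i"
  and rim_succ_pred: "i \<in> {1..k} \<Longrightarrow> rim_succ (rim_pred i) = i"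
  and rim_succ_neq: "i \<in> {1..k} \<Longrightarrow> rim_succ i \<noteq> i"
  and rim_succ_succ_neq: "i \<in> {1..k} \<Longrightarrow> rim_succ (rim_succ i) \<noteq> i"
  using three_le_k by (auto simp: rim_succ_def rim_pred_def)

lemma rim_pred_neq: "i \<in> {1..k} \<Longrightarrow> rim_pred i \<noteq> i"
  using rim_succ_pred rim_succ_neq rim_pred_in_rim by metis

lemma v_eq_iff: "i \<le> k \<Longrightarrow> j \<le> k \<Longrightarrow> v i = v j \<longleftrightarrow> i = j"
  using inj_v by (auto simp: inj_on_def)

lemma rim_ne_hub: "i \<in> {1..k} \<Longrightarrow> v i \<noteq> v 0"
  using v_eq_iff[of i 0] by auto

lemma radius_eq_iff: "i \<in> {1..k} \<Longrightarrow> j \<in> {1..k} \<Longrightarrow> radius i = radius j \<longleftrightarrow> i = j"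
  using rim_ne_hub[of i] v_eq_iff[of i j] by (auto simp: radius_def doubleton_eq_iff)

lemma radius_ne_chord: "i \<in> {1..k} \<Longrightarrow> j \<in> {1..k} \<Longrightarrow> radius i \<noteq> chord j"
  using rim_ne_hub[of j] rim_ne_hub[of "rim_succ j"] rim_succ_in_rim[of j]
  by (auto simp: radius_def chord_def doubleton_eq_iff)

lemma chord_eq_iff: "i \<in> {1..k} \<Longrightarrow> j \<in> {1..k} \<Longrightarrow> chord i = chord j \<longleftrightarrow> i = j"
  using v_eq_iff[of i j] v_eq_iff[of i "rim_succ j"] v_eq_iff[of "rim_succ i" j]
    rim_succ_in_rim[of i] rim_succ_in_rim[of j] rim_succ_succ_neq[of j]
  by (auto simp: chord_def doubleton_eq_iff)

lemma wheel_edges_eq: "E = subwheel {1..k} {1..k}"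
  unfolding wheel_edges_def subwheel_def radius_def chord_def rim_succ_def by auto

lemma subwheel_subset_wheel_edges: "X \<subseteq> {1..k} \<Longrightarrow> C \<subseteq> {1..k} \<Longrightarrow> subwheel X C \<subseteq> E"
  unfolding wheel_edges_eq subwheel_def by blast

lemma radius_in_subwheel_iff:
  "X \<subseteq> {1..k} \<Longrightarrow> C \<subseteq> {1..k} \<Longrightarrow> i \<in> {1..k} \<Longrightarrow> radius i \<in> subwheel X C \<longleftrightarrow> i \<in> X"
  using radius_eq_iff radius_ne_chord unfolding subwheel_def by blast

lemma chord_in_subwheel_iff:
  "X \<subseteq> {1..k} \<Longrightarrow> C \<subseteq> {1..k} \<Longrightarrow> i \<in> {1..k} \<Longrightarrow> chord i \<in> subwheel X C \<longleftrightarrow> i \<in> C"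
  using chord_eq_iff radius_ne_chord unfolding subwheel_def by blast

lemma subwheel_eq_iff:
  assumes "X \<subseteq> {1..k}" "C \<subseteq> {1..k}" "X' \<subseteq> {1..k}" "C' \<subseteq> {1..k}"
  shows "subwheel X C = subwheel X' C' \<longleftrightarrow> X = X' \<and> C = C'"
proof
  assume eq: "subwheel X C = subwheel X' C'"
  have "i \<in> X \<longleftrightarrow> i \<in> X'" "i \<in> C \<longleftrightarrow> i \<in> C'" for i
    using radius_in_subwheel_iff[OF assms(1,2), of i] radius_in_subwheel_iff[OF assms(3,4), of i]
      chord_in_subwheel_iff[OF assms(1,2), of i] chord_in_subwheel_iff[OF assms(3,4), of i]
      assms eq by (cases "i \<in> {1..k}"; auto)+
  then show "X = X' \<and> C = C'" by blast
qed simp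

lemma mem_subwheel_iff: "e \<in> subwheel X C \<longleftrightarrow> (\<exists>i\<in>X. e = radius i) \<or> (\<exists>i\<in>C. e = chord i)"
  unfolding subwheel_def by blast

lemma mem_wheel_edges_iff: "e \<in> E \<longleftrightarrow> (\<exists>i\<in>{1..k}. e = radius i \<or> e = chord i)"
  unfolding wheel_edges_eq mem_subwheel_iff by blast

lemma wheel_edges_Diff_subwheel:
  assumes "X \<subseteq> {1..k}" "C \<subseteq> {1..k}"
  shows "E - subwheel X C = subwheel ({1..k} - X) ({1..k} - C)"
proof (rule set_eqI)
  fix e
  have "e \<in> E - subwheel X C \<longleftrightarrow>
      (\<exists>i\<in>{1..k}. e = radius i \<and> i \<notin> X \<or> e = chord i \<and> i \<notin> C)"
  proof
    assume e: "e \<in> E - subwheel X C"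
    then obtain i where i: "i \<in> {1..k}" "e = radius i \<or> e = chord i"
      using mem_wheel_edges_iff by blast
    then show "\<exists>i\<in>{1..k}. e = radius i \<and> i \<notin> X \<or> e = chord i \<and> i \<notin> C"
      using e radius_in_subwheel_iff[OF assms i(1)] chord_in_subwheel_iff[OF assms i(1)] by blast
  next
    assume "\<exists>i\<in>{1..k}. e = radius i \<and> i \<notin> X \<or> e = chord i \<and> i \<notin> C"
    then obtain i where i: "i \<in> {1..k}" "e = radius i \<and> i \<notin> X \<or> e = chord i \<and> i \<notin> C"
      by blast
    then show "e \<in> E - subwheel X C"
      using radius_in_subwheel_iff[OF assms i(1)] chord_in_subwheel_iff[OF assms i(1)]
        mem_wheel_edges_iff by blast
  qed
  then show "e \<in> E - subwheel X C \<longleftrightarrow> e \<in> subwheel ({1..k} - X) ({1..k} - C)"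
    unfolding mem_subwheel_iff by blast
qed

lemma subset_wheel_edges_eq_subwheel:
  assumes "T \<subseteq> E"
  shows "T = subwheel {i \<in> {1..k}. radius i \<in> T} {i \<in> {1..k}. chord i \<in> T}"
proof (rule set_eqI)
  fix e
  show "e \<in> T \<longleftrightarrow> e \<in> subwheel {i \<in> {1..k}. radius i \<in> T} {i \<in> {1..k}. chord i \<in> T}"
  proof
    assume "e \<in> T"
    moreover obtain i where "i \<in> {1..k}" "e = radius i \<or> e = chord i"
      using \<open>e \<in> T\<close> assms mem_wheel_edges_iff by blast
    ultimately show "e \<in> subwheel {i \<in> {1..k}. radius i \<in> T} {i \<in> {1..k}. chord i \<in> T}"
      unfolding subwheel_def by blast
  qed (auto simp: subwheel_def)
qed

lemma edge_at_rim_vertex: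
  assumes i: "i \<in> {1..k}" and "e \<in> E" "v i \<in> e"
  shows "e = radius i \<or> e = chord i \<or> e = chord (rim_pred i)"
proof -
  obtain j where j: "j \<in> {1..k}" "e = radius j \<or> e = chord j"
    using \<open>e \<in> E\<close> mem_wheel_edges_iff by blast
  then have "v i = v 0 \<or> v i = v j \<or> (e = chord j \<and> v i = v (rim_succ j))"
    using \<open>v i \<in> e\<close> by (auto simp: radius_def chord_def)
  then have "j = i \<or> (e = chord j \<and> rim_succ j = i)"
    using rim_ne_hub[OF i] i j(1) rim_succ_in_rim[OF j(1)] by (auto simp: v_eq_iff)
  then show ?thesis using j rim_pred_succ by auto
qed


lemma spanning_tree_rim_parent:
  fixes rank :: "nat \<Rightarrow> nat"
  assumes "\<And>i. i \<in> {1..k} \<Longrightarrow> q i \<le> k \<and> rank (q i) < rank i"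
  shows "spanning_tree V ((\<lambda>i. {v i, v (q i)}) ` {1..k})"
proof -
  have "{0..k} - {0} = {1..k}" by auto
  moreover have "spanning_tree (v ` {0..k}) ((\<lambda>i. {v i, v (q i)}) ` ({0..k} - {0}))"
    by (rule spanning_tree_parent_edges[OF inj_v, where rank = rank]) (use assms in auto)
  ultimately show ?thesis unfolding wheel_vertices_def by simp
qed

lemma val_subwheel:
  assumes X: "X \<subseteq> {1..k}" and C: "C \<subseteq> {1..k}" and i: "i \<in> {1..k}"
  shows "val (subwheel X C) (v i) = of_bool (i \<in> X) + of_bool (i \<in> C) + of_bool (rim_pred i \<in> C)"
proof -
  have "{e \<in> subwheel X C. v i \<in> e} =
      (if i \<in> X then {radius i} else {}) \<union> (if i \<in> C then {chord i} else {}) \<union>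
      (if rim_pred i \<in> C then {chord (rim_pred i)} else {})"
    using edge_at_rim_vertex[OF i] subwheel_subset_wheel_edges[OF X C]
      radius_in_subwheel_iff[OF X C i] chord_in_subwheel_iff[OF X C i]
      chord_in_subwheel_iff[OF X C rim_pred_in_rim[OF i]]
    by (auto simp: radius_def chord_def rim_succ_pred[OF i])
  moreover have "radius i \<noteq> chord i" "radius i \<noteq> chord (rim_pred i)"
    "chord i \<noteq> chord (rim_pred i)"
    using i rim_pred_in_rim[OF i] rim_pred_neq[OF i] radius_ne_chord chord_eq_iff by auto
  ultimately show ?thesis unfolding val_def by auto
qed

section \<open>The two families of coupled trees\<close>

(* Each maximal run of consecutive chords of C is joined to the hub by the radius at its first
   vertex (tree_first) or at its last vertex (tree_last). *)
definition tree_first :: "nat set \<Rightarrow> 'a set set" where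
  "tree_first C = subwheel {i \<in> {1..k}. rim_pred i \<notin> C} C"

definition tree_last :: "nat set \<Rightarrow> 'a set set" where
  "tree_last C = subwheel ({1..k} - C) C"

lemma wheel_edges_Diff_tree_first:
  assumes "C \<subseteq> {1..k}"
  shows "E - tree_first C = tree_first ({1..k} - C)"
proof -
  have "{1..k} - {i \<in> {1..k}. rim_pred i \<notin> C} = {i \<in> {1..k}. rim_pred i \<notin> {1..k} - C}"
    using rim_pred_in_rim by blast
  then show ?thesis
    unfolding tree_first_def by (subst wheel_edges_Diff_subwheel) (use assms in auto)
qed

lemma wheel_edges_Diff_tree_last:
  assumes "C \<subseteq> {1..k}"
  shows "E - tree_last C = tree_last ({1..k} - C)"
proof -
  have "{1..k} - ({1..k} - C) = C" using assms by blast
  then show ?thesis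
    unfolding tree_last_def by (subst wheel_edges_Diff_subwheel) (use assms in auto)
qed

lemma spanning_tree_tree_first:
  assumes C: "C \<subseteq> {1..k}" and "C \<noteq> {1..k}"
  shows "spanning_tree V (tree_first C)"
proof -
  obtain c where c: "c \<in> {1..k}" "c \<notin> C" using assms by blast
  define b where "b = rim_succ c"
  \<comment> \<open>Following chords of C backwards never crosses chord c, so the distance from b
    along the rim decreases.\<close>
  define q where "q i = (if rim_pred i \<in> C then rim_pred i else 0)" for i
  define rank :: "nat \<Rightarrow> nat" where
    "rank i = (if i = 0 then 0 else if b \<le> i then i - b + 1 else i + k - b + 1)" for i
  have "tree_first C = (\<lambda>i. {v i, v (q i)}) ` {1..k}"
  proof -
    have "tree_first C = (\<lambda>i. if rim_pred i \<in> C then chord (rim_pred i) else radius i) ` {1..k}"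
      (is "_ = ?F ` _")
    proof
      have "chord j \<in> ?F ` {1..k}" if "j \<in> C" for j
      proof
        show "rim_succ j \<in> {1..k}" "chord j = ?F (rim_succ j)"
          using that C rim_pred_succ rim_succ_in_rim by auto
      qed
      then show "tree_first C \<subseteq> ?F ` {1..k}"
        unfolding tree_first_def subwheel_def by auto
      show "?F ` {1..k} \<subseteq> tree_first C"
        unfolding tree_first_def subwheel_def by auto
    qed
    also have "\<dots> = (\<lambda>i. {v i, v (q i)}) ` {1..k}"
      by (rule image_cong) (auto simp: q_def chord_def radius_def rim_succ_pred insert_commute)
    finally show ?thesis .
  qed
  moreover have "q i \<le> k \<and> rank (q i) < rank i" if i: "i \<in> {1..k}" for i
  proof (cases "rim_pred i \<in> C")
    case True
    then have "i \<noteq> b" using c rim_pred_succ unfolding b_def by auto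
    then show ?thesis
      using True i three_le_k rim_succ_in_rim[OF c(1)]
      unfolding q_def rank_def b_def by (auto simp: rim_pred_def)
  qed (use i in \<open>auto simp: q_def rank_def\<close>)
  ultimately show ?thesis using spanning_tree_rim_parent by metis
qed

lemma spanning_tree_tree_last:
  assumes C: "C \<subseteq> {1..k}" and "C \<noteq> {1..k}"
  shows "spanning_tree V (tree_last C)"
proof -
  obtain c where c: "c \<in> {1..k}" "c \<notin> C" using assms by blast
  \<comment> \<open>Following chords of C forwards never crosses chord c, so the distance to c
    along the rim decreases.\<close>
  define q where "q i = (if i \<in> C then rim_succ i else 0)" for i
  define rank :: "nat \<Rightarrow> nat" where
    "rank i = (if i = 0 then 0 else if i \<le> c then c - i + 1 else c + k - i + 1)" for i
  have "tree_last C = (\<lambda>i. if i \<in> C then chord i else radius i) ` {1..k}"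
    unfolding tree_last_def subwheel_def using C by (force simp: image_iff)
  also have "\<dots> = (\<lambda>i. {v i, v (q i)}) ` {1..k}"
    by (rule image_cong) (auto simp: q_def chord_def radius_def insert_commute)
  finally have "tree_last C = (\<lambda>i. {v i, v (q i)}) ` {1..k}" .
  moreover have "q i \<le> k \<and> rank (q i) < rank i" if i: "i \<in> {1..k}" for i
  proof (cases "i \<in> C")
    case True
    then have "i \<noteq> c" using c by auto
    then show ?thesis
      using True i c three_le_k unfolding q_def rank_def by (auto simp: rim_succ_def)
  qed (use i in \<open>auto simp: q_def rank_def\<close>)
  ultimately show ?thesis using spanning_tree_rim_parent by metis
qed

lemma coupled_tree_tree_first:
  assumes C: "C \<subseteq> {1..k}" and ne: "C \<noteq> {}" and nf: "C \<noteq> {1..k}"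
  shows "coupled_tree V E (tree_first C)"
proof -
  have "tree_first C \<subseteq> E"
    unfolding tree_first_def by (rule subwheel_subset_wheel_edges) (use C in auto)
  moreover have "spanning_tree V (tree_first C)"
    using C nf by (rule spanning_tree_tree_first)
  moreover have "spanning_tree V (tree_first ({1..k} - C))"
    by (rule spanning_tree_tree_first) (use C ne in blast)+
  ultimately show ?thesis
    unfolding coupled_tree_def wheel_edges_Diff_tree_first[OF C] by blast
qed

lemma coupled_tree_tree_last:
  assumes C: "C \<subseteq> {1..k}" and ne: "C \<noteq> {}" and nf: "C \<noteq> {1..k}"
  shows "coupled_tree V E (tree_last C)"
proof -
  have "tree_last C \<subseteq> E"
    unfolding tree_last_def by (rule subwheel_subset_wheel_edges) (use C in auto)
  moreover have "spanning_tree V (tree_last C)"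
    using C nf by (rule spanning_tree_tree_last)
  moreover have "spanning_tree V (tree_last ({1..k} - C))"
    by (rule spanning_tree_tree_last) (use C ne in blast)+
  ultimately show ?thesis
    unfolding coupled_tree_def wheel_edges_Diff_tree_last[OF C] by blast
qed

lemma val_tree_first:
  assumes "C \<subseteq> {1..k}" "i \<in> {1..k}"
  shows "val (tree_first C) (v i) = (if i \<in> C then 2 else 1)"
proof -
  have "{i \<in> {1..k}. rim_pred i \<notin> C} \<subseteq> {1..k}" by blast
  from val_subwheel[OF this assms] show ?thesis
    unfolding tree_first_def using assms(2) by (cases "rim_pred i \<in> C") auto
qed

lemma val_tree_last:
  assumes "C \<subseteq> {1..k}" "i \<in> {1..k}"
  shows "val (tree_last C) (v i) = (if rim_pred i \<in> C then 2 else 1)"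
proof -
  have "{1..k} - C \<subseteq> {1..k}" by blast
  from val_subwheel[OF this assms] show ?thesis
    unfolding tree_last_def using assms(2) by (cases "i \<in> C") auto
qed

section \<open>Every coupled tree belongs to one of the families\<close>

definition rim_shift :: "nat \<Rightarrow> nat \<Rightarrow> nat" where
  "rim_shift j t = (j - 1 + t) mod k + 1"

lemma rim_shift_eq:
  assumes "j \<in> {1..k}" "t < k"
  shows "rim_shift j t = (if j + t \<le> k then j + t else j + t - k)"
  using assms by (auto simp: rim_shift_def mod_if)

lemma rim_shift_in_rim: "rim_shift j t \<in> {1..k}"
  using three_le_k by (simp add: rim_shift_def Suc_le_eq)

lemma rim_shift_0: "j \<in> {1..k} \<Longrightarrow> rim_shift j 0 = j"
  using three_le_k by (simp add: rim_shift_eq)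

lemma rim_succ_shift: "rim_succ (rim_shift j t) = rim_shift j (Suc t)"
  using three_le_k by (auto simp: rim_shift_def rim_succ_def mod_Suc)

lemma rim_pred_shift_Suc: "rim_pred (rim_shift j (Suc t)) = rim_shift j t"
  using rim_pred_succ[OF rim_shift_in_rim] rim_succ_shift by metis

lemma rim_shift_shift: "j \<in> {1..k} \<Longrightarrow> rim_shift (rim_shift j s) t = rim_shift j (s + t)"
  by (simp add: rim_shift_def mod_add_left_eq add.assoc)

lemma rim_shift_inj: "j \<in> {1..k} \<Longrightarrow> s < k \<Longrightarrow> t < k \<Longrightarrow> rim_shift j s = rim_shift j t \<longleftrightarrow> s = t"
  by (auto simp: rim_shift_eq split: if_splits)

lemma rim_shift_surj:
  assumes "i \<in> {1..k}" "j \<in> {1..k}"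
  obtains t where "t < k" "rim_shift j t = i"
proof
  define t where "t = (if j \<le> i then i - j else i + k - j)"
  show "t < k" using assms by (auto simp: t_def)
  then show "rim_shift j t = i" using assms by (auto simp: t_def rim_shift_eq)
qed

lemma has_cycle_all_chords:
  assumes "\<forall>i\<in>{1..k}. chord i \<in> T"
  shows "has_cycle T"
proof (rule has_cycleI)
  let ?xs = "map v [1..<k+1]"
  show "3 \<le> length ?xs" using three_le_k by simp
  have "inj_on v {1..<k+1}" using inj_v by (rule inj_on_subset) auto
  then show "distinct ?xs" by (simp add: distinct_map del: upt_Suc)
  show "{?xs ! i, ?xs ! Suc i} \<in> T" if "Suc i < length ?xs" for i
  proof -
    have "chord (Suc i) \<in> T" "rim_succ (Suc i) = Suc (Suc i)"
      using assms that by (auto simp: rim_succ_def simp del: upt_Suc)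
    then show ?thesis using that by (simp add: chord_def del: upt_Suc)
  qed
  have "chord k \<in> T" "rim_succ k = 1" using assms three_le_k by (auto simp: rim_succ_def)
  then show "{last ?xs, hd ?xs} \<in> T"
    using three_le_k by (simp add: chord_def last_map hd_map upt_conv_Cons)
qed

lemma has_cycle_arc:
  assumes j: "j \<in> {1..k}" and m: "1 \<le> m" "m < k"
    and ends: "radius j \<in> T" "radius (rim_shift j m) \<in> T"
    and arc: "\<forall>t<m. chord (rim_shift j t) \<in> T"
  shows "has_cycle T"
proof (rule has_cycleI)
  let ?xs = "v 0 # map (\<lambda>t. v (rim_shift j t)) [0..<m+1]"
  show "3 \<le> length ?xs" using m by simp
  have "inj_on (\<lambda>t. v (rim_shift j t)) {0..<m+1}"
    using m rim_shift_in_rim rim_shift_inj[OF j] v_eq_iff by (auto intro!: inj_onI)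
  moreover have "v 0 \<noteq> v (rim_shift j t)" for t
    using rim_ne_hub[OF rim_shift_in_rim] by metis
  ultimately show "distinct ?xs" by (auto simp: distinct_map simp del: upt_Suc)
  show "{?xs ! i, ?xs ! Suc i} \<in> T" if "Suc i < length ?xs" for i
  proof (cases i)
    case 0
    then show ?thesis using ends(1) rim_shift_0[OF j] by (simp add: radius_def del: upt_Suc)
  next
    case (Suc t)
    then have "chord (rim_shift j t) \<in> T" using arc that by simp
    then show ?thesis
      using Suc that by (simp add: chord_def rim_succ_shift nth_append del: upt_Suc)
  qed
  show "{last ?xs, hd ?xs} \<in> T"
    using ends(2) by (simp add: radius_def insert_commute last_map del: upt_Suc)
qed

lemma spanning_tree_edge_at_rim_vertex:
  assumes "spanning_tree V T" "T \<subseteq> E" and i: "i \<in> {1..k}"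
  shows "radius i \<in> T \<or> chord i \<in> T \<or> chord (rim_pred i) \<in> T"
proof -
  have "v i \<in> V" "v 0 \<in> V" using i by (auto simp: wheel_vertices_def)
  then have "(adj T)\<^sup>*\<^sup>* (v i) (v 0)"
    using assms(1) unfolding spanning_tree_def connected_on_def by blast
  then obtain y where "adj T (v i) y" using rim_ne_hub[OF i] by (metis converse_rtranclpE)
  then have "{v i, y} \<in> T" unfolding adj_def by simp
  with edge_at_rim_vertex[OF i] assms(2) show ?thesis by (metis insertI1 subsetD)
qed

definition first_rule :: "'a set set \<Rightarrow> nat \<Rightarrow> bool" where
  "first_rule T i \<longleftrightarrow> (radius i \<in> T \<longleftrightarrow> chord (rim_pred i) \<notin> T)"

definition last_rule :: "'a set set \<Rightarrow> nat \<Rightarrow> bool" where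
  "last_rule T i \<longleftrightarrow> (radius i \<in> T \<longleftrightarrow> chord i \<notin> T)"

lemma coupled_tree_local_rule:
  assumes T: "coupled_tree V E T" and i: "i \<in> {1..k}"
  shows "first_rule T i \<or> last_rule T i"
proof -
  have "radius i \<in> E" "chord i \<in> E" "chord (rim_pred i) \<in> E"
    using i rim_pred_in_rim[OF i] mem_wheel_edges_iff by blast+
  moreover have "radius i \<in> T \<or> chord i \<in> T \<or> chord (rim_pred i) \<in> T"
    using T i spanning_tree_edge_at_rim_vertex unfolding coupled_tree_def by blast
  moreover have "radius i \<in> E - T \<or> chord i \<in> E - T \<or> chord (rim_pred i) \<in> E - T"
    using T i spanning_tree_edge_at_rim_vertex unfolding coupled_tree_def by blast
  ultimately show ?thesis unfolding first_rule_def last_rule_def by blast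
qed

lemma coupled_tree_no_monochromatic_arc:
  assumes T: "coupled_tree V E T" and j: "j \<in> {1..k}" and m: "1 \<le> m" "m < k"
    and ends: "radius j \<in> T \<longleftrightarrow> \<sigma>" "radius (rim_shift j m) \<in> T \<longleftrightarrow> \<sigma>"
    and arc: "\<forall>t<m. chord (rim_shift j t) \<in> T \<longleftrightarrow> \<sigma>"
  shows False
proof (cases \<sigma>)
  case True
  then have "radius j \<in> T" "radius (rim_shift j m) \<in> T" "\<forall>t<m. chord (rim_shift j t) \<in> T"
    using ends arc by simp_all
  then have "has_cycle T" by (rule has_cycle_arc[OF j m])
  then show False using T unfolding coupled_tree_def spanning_tree_def by blast
next
  case False
  have "radius j \<in> E" "radius (rim_shift j m) \<in> E" "chord (rim_shift j t) \<in> E" for t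
    using j rim_shift_in_rim mem_wheel_edges_iff by blast+
  then have "radius j \<in> E - T" "radius (rim_shift j m) \<in> E - T"
    "\<forall>t<m. chord (rim_shift j t) \<in> E - T"
    using ends arc False by simp_all
  then have "has_cycle (E - T)" by (rule has_cycle_arc[OF j m])
  then show False using T unfolding coupled_tree_def spanning_tree_def by blast
qed

lemma chord_constant_along_arc:
  assumes j: "j \<in> {1..k}" and "t < m"
    and interior: "\<And>s. 0 < s \<Longrightarrow> s < m \<Longrightarrow> first_rule T (rim_shift j s) \<and> last_rule T (rim_shift j s)"
  shows "chord (rim_shift j t) \<in> T \<longleftrightarrow> chord j \<in> T"
  using \<open>t < m\<close>
proof (induction t)
  case 0
  then show ?case using rim_shift_0[OF j] by simp
next
  case (Suc t)
  then have "first_rule T (rim_shift j (Suc t))" "last_rule T (rim_shift j (Suc t))"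
    using interior by simp_all
  then have "chord (rim_shift j (Suc t)) \<in> T \<longleftrightarrow> chord (rim_shift j t) \<in> T"
    unfolding first_rule_def last_rule_def rim_pred_shift_Suc by blast
  then show ?case using Suc by simp
qed

lemma coupled_tree_rule_everywhere:
  assumes T: "coupled_tree V E T"
  shows "(\<forall>i\<in>{1..k}. first_rule T i) \<or> (\<forall>i\<in>{1..k}. last_rule T i)"
proof (rule ccontr)
  assume "\<not> ?thesis"
  then obtain i0 j0 where i0: "i0 \<in> {1..k}" "\<not> first_rule T i0"
    and j0: "j0 \<in> {1..k}" "\<not> last_rule T j0" by blast
  \<comment> \<open>On a shortest arc from a failure of the last rule to a failure of the first rule,
    both rules hold in the interior, so all its chords and both end radii lie on one side of T.\<close>
  define bad where "bad m \<longleftrightarrow> 1 \<le> m \<and> m < k \<and>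
    (\<exists>j\<in>{1..k}. \<not> last_rule T j \<and> \<not> first_rule T (rim_shift j m))" for m
  obtain t0 where t0: "t0 < k" "rim_shift j0 t0 = i0" using rim_shift_surj[OF i0(1) j0(1)] .
  have "i0 \<noteq> j0" using coupled_tree_local_rule[OF T j0(1)] i0 j0 by blast
  then have "t0 \<noteq> 0" using t0 rim_shift_0[OF j0(1)] by metis
  then have "bad t0" unfolding bad_def using t0 i0 j0 by auto
  define m where "m = (LEAST m. bad m)"
  have "bad m" unfolding m_def by (rule LeastI) fact
  have minimal: "\<not> bad m'" if "m' < m" for m'
    using not_less_Least[of m' bad] that unfolding m_def .
  from \<open>bad m\<close> obtain j where m: "1 \<le> m" "m < k" and j: "j \<in> {1..k}" "\<not> last_rule T j"
    and end_m: "\<not> first_rule T (rim_shift j m)" unfolding bad_def by blast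
  have interior: "first_rule T (rim_shift j s) \<and> last_rule T (rim_shift j s)"
    if s: "0 < s" "s < m" for s
  proof
    show "first_rule T (rim_shift j s)"
      using minimal[OF s(2)] s m j unfolding bad_def by auto
    show "last_rule T (rim_shift j s)"
    proof (rule ccontr)
      assume "\<not> last_rule T (rim_shift j s)"
      moreover have "rim_shift (rim_shift j s) (m - s) = rim_shift j m"
        using rim_shift_shift[OF j(1)] s by simp
      ultimately have "bad (m - s)"
        unfolding bad_def using s m end_m rim_shift_in_rim by auto
      then show False using minimal[of "m - s"] s by simp
    qed
  qed
  let ?\<sigma> = "chord j \<in> T"
  have arc: "\<forall>t<m. chord (rim_shift j t) \<in> T \<longleftrightarrow> ?\<sigma>"
    using chord_constant_along_arc[OF j(1) _ interior] by blast
  have "rim_pred (rim_shift j m) = rim_shift j (m - 1)"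
    using rim_pred_shift_Suc[of j "m - 1"] m by simp
  then have "radius (rim_shift j m) \<in> T \<longleftrightarrow> ?\<sigma>"
    using end_m arc m unfolding first_rule_def by simp
  moreover have "radius j \<in> T \<longleftrightarrow> ?\<sigma>" using j(2) unfolding last_rule_def by blast
  ultimately show False using coupled_tree_no_monochromatic_arc[OF T j(1) m] arc by blast
qed

lemma tree_first_if_first_rule:
  assumes "T \<subseteq> E" "\<forall>i\<in>{1..k}. first_rule T i"
  shows "T = tree_first {i \<in> {1..k}. chord i \<in> T}"
proof -
  have "{i \<in> {1..k}. radius i \<in> T} = {i \<in> {1..k}. rim_pred i \<notin> {i \<in> {1..k}. chord i \<in> T}}"
    using assms(2) rim_pred_in_rim unfolding first_rule_def by blast
  then show ?thesis
    using subset_wheel_edges_eq_subwheel[OF assms(1)] unfolding tree_first_def by simp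
qed

lemma tree_last_if_last_rule:
  assumes "T \<subseteq> E" "\<forall>i\<in>{1..k}. last_rule T i"
  shows "T = tree_last {i \<in> {1..k}. chord i \<in> T}"
proof -
  have "{i \<in> {1..k}. radius i \<in> T} = {1..k} - {i \<in> {1..k}. chord i \<in> T}"
    using assms(2) unfolding last_rule_def by blast
  then show ?thesis
    using subset_wheel_edges_eq_subwheel[OF assms(1)] unfolding tree_last_def by simp
qed

definition proper_rim_sets :: "nat set set" where
  "proper_rim_sets = Pow {1..k} - {{}, {1..k}}"

lemma coupled_tree_chords_proper:
  assumes T: "coupled_tree V E T"
  shows "{i \<in> {1..k}. chord i \<in> T} \<in> proper_rim_sets"
proof -
  have "\<not> has_cycle T" "\<not> has_cycle (E - T)"
    using T by (simp_all add: coupled_tree_def spanning_tree_def)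
  then obtain a b where a: "a \<in> {1..k}" "chord a \<notin> T" and b: "b \<in> {1..k}" "chord b \<notin> E - T"
    using has_cycle_all_chords by meson
  have "chord b \<in> E" using b(1) mem_wheel_edges_iff by blast
  then have "b \<in> {i \<in> {1..k}. chord i \<in> T}" "a \<notin> {i \<in> {1..k}. chord i \<in> T}" using a b by simp_all
  then show ?thesis unfolding proper_rim_sets_def using a(1) by blast
qed

lemma coupled_tree_iff:
  "coupled_tree V E T \<longleftrightarrow> (\<exists>C\<in>proper_rim_sets. T = tree_first C \<or> T = tree_last C)"
proof
  assume T: "coupled_tree V E T"
  then have "T \<subseteq> E" unfolding coupled_tree_def by blast
  then show "\<exists>C\<in>proper_rim_sets. T = tree_first C \<or> T = tree_last C"
    using coupled_tree_rule_everywhere[OF T] coupled_tree_chords_proper[OF T]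
      tree_first_if_first_rule tree_last_if_last_rule by blast
next
  assume "\<exists>C\<in>proper_rim_sets. T = tree_first C \<or> T = tree_last C"
  then show "coupled_tree V E T"
    unfolding proper_rim_sets_def using coupled_tree_tree_first coupled_tree_tree_last by blast
qed

section \<open>Counting\<close>

lemma rim_set_closed_under_pred:
  assumes "C \<subseteq> {1..k}" "\<forall>i\<in>{1..k}. rim_pred i \<in> C \<longleftrightarrow> i \<in> C"
  shows "C = {} \<or> C = {1..k}"
proof -
  have all: "j \<in> C \<longleftrightarrow> 1 \<in> C" if "1 \<le> j" "j \<le> k" for j
    using that
  proof (induction j)
    case (Suc j)
    show ?case
    proof (cases "j = 0")
      case False
      then have "rim_pred (Suc j) = j" by (simp add: rim_pred_def)
      then show ?thesis using bspec[OF assms(2), of "Suc j"] Suc.prems Suc.IH False by simp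
    qed simp
  qed simp
  show ?thesis
  proof (cases "1 \<in> C")
    case True
    then have "{1..k} \<subseteq> C" using all atLeastAtMost_iff by blast
    then show ?thesis using assms(1) by blast
  next
    case False
    then have "C = {}" using all assms(1) atLeastAtMost_iff by blast
    then show ?thesis ..
  qed
qed

lemma tree_first_ne_tree_last:
  assumes "C \<in> proper_rim_sets" "C' \<in> proper_rim_sets"
  shows "tree_first C \<noteq> tree_last C'"
proof
  assume "tree_first C = tree_last C'"
  moreover have C: "C \<subseteq> {1..k}" "C' \<subseteq> {1..k}" using assms unfolding proper_rim_sets_def by auto
  moreover have "{i \<in> {1..k}. rim_pred i \<notin> C} \<subseteq> {1..k}" "{1..k} - C' \<subseteq> {1..k}" by auto
  ultimately have eq: "{i \<in> {1..k}. rim_pred i \<notin> C} = {1..k} - C'" and "C = C'"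
    unfolding tree_first_def tree_last_def using subwheel_eq_iff by metis+
  have "rim_pred i \<in> C \<longleftrightarrow> i \<in> C" if "i \<in> {1..k}" for i
  proof -
    have "i \<in> {i \<in> {1..k}. rim_pred i \<notin> C} \<longleftrightarrow> i \<in> {1..k} - C" using eq \<open>C = C'\<close> by simp
    then show ?thesis using that by simp
  qed
  then have "C = {} \<or> C = {1..k}" using rim_set_closed_under_pred[OF C(1)] by blast
  then show False using assms(1) unfolding proper_rim_sets_def by blast
qed

lemma inj_on_tree_first: "inj_on tree_first proper_rim_sets"
proof (rule inj_onI)
  fix C C' assume "C \<in> proper_rim_sets" "C' \<in> proper_rim_sets" "tree_first C = tree_first C'"
  moreover have "{i \<in> {1..k}. rim_pred i \<notin> C} \<subseteq> {1..k}" "{i \<in> {1..k}. rim_pred i \<notin> C'} \<subseteq> {1..k}" by auto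
  ultimately show "C = C'"
    unfolding tree_first_def proper_rim_sets_def by (simp add: subwheel_eq_iff)
qed

lemma inj_on_tree_last: "inj_on tree_last proper_rim_sets"
proof (rule inj_onI)
  fix C C' assume "C \<in> proper_rim_sets" "C' \<in> proper_rim_sets" "tree_last C = tree_last C'"
  moreover have "{1..k} - C \<subseteq> {1..k}" "{1..k} - C' \<subseteq> {1..k}" by auto
  ultimately show "C = C'"
    unfolding tree_last_def proper_rim_sets_def by (simp add: subwheel_eq_iff)
qed

lemma card_proper_rim_sets: "card proper_rim_sets = 2 ^ k - 2"
proof -
  have "card {{}, {1..k}} = 2" using three_le_k by auto
  then show ?thesis unfolding proper_rim_sets_def
    by (subst card_Diff_subset) (auto simp: card_Pow)
qed

lemma card_coupled_trees: "card {T. coupled_tree V E T} = 2 ^ (k + 1) - 4"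
proof -
  have "{T. coupled_tree V E T} = tree_first ` proper_rim_sets \<union> tree_last ` proper_rim_sets"
    using coupled_tree_iff by blast
  moreover have "tree_first ` proper_rim_sets \<inter> tree_last ` proper_rim_sets = {}"
    using tree_first_ne_tree_last by blast
  moreover have "finite proper_rim_sets" unfolding proper_rim_sets_def by simp
  ultimately have "card {T. coupled_tree V E T} = 2 * card proper_rim_sets"
    using card_image[OF inj_on_tree_first] card_image[OF inj_on_tree_last]
    by (simp add: card_Un_disjoint)
  then show ?thesis by (simp add: card_proper_rim_sets right_diff_distrib')
qed

lemma tree_first_valences_iff:
  assumes C: "C \<subseteq> {1..k}" and d: "\<forall>i\<in>{1..k}. d i \<in> {1, 2}"
  shows "(\<forall>i\<in>{1..k}. val (tree_first C) (v i) = d i) \<longleftrightarrow> C = {i \<in> {1..k}. d i = 2}"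
proof -
  have "val (tree_first C) (v i) = d i \<longleftrightarrow> (i \<in> C \<longleftrightarrow> d i = 2)" if "i \<in> {1..k}" for i
  proof -
    have "d i = 1 \<or> d i = 2" using d that by blast
    then show ?thesis using val_tree_first[OF C that] by (cases "i \<in> C"; elim disjE; simp)
  qed
  then have "(\<forall>i\<in>{1..k}. val (tree_first C) (v i) = d i) \<longleftrightarrow> (\<forall>i\<in>{1..k}. i \<in> C \<longleftrightarrow> d i = 2)"
    by blast
  also have "\<dots> \<longleftrightarrow> C = {i \<in> {1..k}. d i = 2}" using C by blast
  finally show ?thesis .
qed

lemma tree_last_valences_iff:
  assumes C: "C \<subseteq> {1..k}" and d: "\<forall>i\<in>{1..k}. d i \<in> {1, 2}"
  shows "(\<forall>i\<in>{1..k}. val (tree_last C) (v i) = d i) \<longleftrightarrow> C = {i \<in> {1..k}. d (rim_succ i) = 2}"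
proof -
  have "val (tree_last C) (v i) = d i \<longleftrightarrow> (rim_pred i \<in> C \<longleftrightarrow> d i = 2)" if "i \<in> {1..k}" for i
  proof -
    have "d i = 1 \<or> d i = 2" using d that by blast
    then show ?thesis using val_tree_last[OF C that] by (cases "rim_pred i \<in> C"; elim disjE; simp)
  qed
  then have "(\<forall>i\<in>{1..k}. val (tree_last C) (v i) = d i) \<longleftrightarrow>
      (\<forall>i\<in>{1..k}. rim_pred i \<in> C \<longleftrightarrow> d i = 2)"
    by blast
  also have "\<dots> \<longleftrightarrow> (\<forall>j\<in>{1..k}. j \<in> C \<longleftrightarrow> d (rim_succ j) = 2)"
    using rim_succ_in_rim rim_pred_in_rim rim_pred_succ rim_succ_pred by metis
  also have "\<dots> \<longleftrightarrow> C = {i \<in> {1..k}. d (rim_succ i) = 2}" using C by blast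
  finally show ?thesis .
qed

lemma card_coupled_trees_with_valences:
  assumes d: "\<forall>i\<in>{1..k}. d i \<in> {1, 2}" and nonconst: "\<exists>i\<in>{1..k}. \<exists>j\<in>{1..k}. d i \<noteq> d j"
  shows "card {T. coupled_tree V E T \<and> (\<forall>i\<in>{1..k}. val T (v i) = d i)} = 2"
proof -
  define D where "D = {i \<in> {1..k}. d i = 2}"
  define D' where "D' = {i \<in> {1..k}. d (rim_succ i) = 2}"
  obtain a b where a: "a \<in> {1..k}" "d a = 2" and b: "b \<in> {1..k}" "d b = 1"
    using d nonconst by (metis insert_iff singletonD)
  have "D \<subseteq> {1..k}" unfolding D_def by blast
  moreover have "a \<in> D" "b \<notin> D" using a b unfolding D_def by simp_all
  ultimately have D: "D \<in> proper_rim_sets" unfolding proper_rim_sets_def using b(1) by blast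
  have "D' \<subseteq> {1..k}" unfolding D'_def by blast
  moreover have "rim_pred a \<in> D'" "rim_pred b \<notin> D'"
    using a b rim_pred_in_rim rim_succ_pred unfolding D'_def by simp_all
  ultimately have D': "D' \<in> proper_rim_sets"
    unfolding proper_rim_sets_def using rim_pred_in_rim[OF b(1)] by blast
  have sub: "C \<subseteq> {1..k}" if "C \<in> proper_rim_sets" for C
    using that unfolding proper_rim_sets_def by blast
  have "coupled_tree V E T \<and> (\<forall>i\<in>{1..k}. val T (v i) = d i) \<longleftrightarrow>
      T = tree_first D \<or> T = tree_last D'" for T
  proof
    assume T: "coupled_tree V E T \<and> (\<forall>i\<in>{1..k}. val T (v i) = d i)"
    then obtain C where C: "C \<in> proper_rim_sets" "T = tree_first C \<or> T = tree_last C"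
      using coupled_tree_iff by blast
    from C(2) show "T = tree_first D \<or> T = tree_last D'"
    proof
      assume "T = tree_first C"
      then have "C = D"
        using T tree_first_valences_iff[OF sub[OF C(1)] d] unfolding D_def by simp
      then show ?thesis using \<open>T = tree_first C\<close> by simp
    next
      assume "T = tree_last C"
      then have "C = D'"
        using T tree_last_valences_iff[OF sub[OF C(1)] d] unfolding D'_def by simp
      then show ?thesis using \<open>T = tree_last C\<close> by simp
    qed
  next
    have "\<forall>i\<in>{1..k}. val (tree_first D) (v i) = d i"
      using tree_first_valences_iff[OF sub[OF D] d] unfolding D_def by simp
    moreover have "\<forall>i\<in>{1..k}. val (tree_last D') (v i) = d i"
      using tree_last_valences_iff[OF sub[OF D'] d] unfolding D'_def by simp
    moreover have "coupled_tree V E (tree_first D)" "coupled_tree V E (tree_last D')"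
      using coupled_tree_iff D D' by blast+
    moreover assume "T = tree_first D \<or> T = tree_last D'"
    ultimately show "coupled_tree V E T \<and> (\<forall>i\<in>{1..k}. val T (v i) = d i)" by blast
  qed
  then have "{T. coupled_tree V E T \<and> (\<forall>i\<in>{1..k}. val T (v i) = d i)} = {tree_first D, tree_last D'}"
    by blast
  then show ?thesis using tree_first_ne_tree_last[OF D D'] by simp
qed

end

theorem proposition3p3:
  fixes v :: "nat \<Rightarrow> 'a" and k :: nat and d :: "nat \<Rightarrow> nat"
  assumes "k \<ge> 3"
    and "inj_on v {0..k}"
    and "\<forall>i\<in>{1..k}. d i \<in> {1, 2}"
    and "\<exists>i\<in>{1..k}. \<exists>j\<in>{1..k}. d i \<noteq> d j"
  shows "card {T. coupled_tree (wheel_vertices v k) (wheel_edges v k) T \<and>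
                  (\<forall>i\<in>{1..k}. val T (v i) = d i)} = 2 \<and>
         card {T. coupled_tree (wheel_vertices v k) (wheel_edges v k) T} = 2 ^ (k + 1) - 4"
proof -
  interpret wheel v k using assms(1,2) by unfold_locales
  show ?thesis using card_coupled_trees_with_valences[OF assms(3,4)] card_coupled_trees by simp
qed

end
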